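(* Let $N\ge 2$ and let $\hat{\mu}^A=(\hat\mu^A_1,\dots,\hat\mu^A_N)$ and $\hat{\mu}^B=(\hat\mu^B_1,\dots,\hat\mu^B_N)$ be real-valued random vectors (with finite expectations). For $1\le K\le N$ let $\mathcal{M}_K$ be the set of indices corresponding to the $K$ largest values of $\hat{\mu}^B$, and let $a_K^*\in\mathcal{M}_K$ be an index with $\hat{\mu}^A_{a_K^*}=\max_{i\in\mathcal{M}_K}\hat{\mu}^A_i$ (ties broken uniformly at random). Then for every $1\le K<N$, $$\mathbb{E}\left[\hat{\mu}^B_{a_K^*}\right]\ \ge\ \mathbb{E}\left[\hat{\mu}^B_{a_{K+1}^*}\right],$$ i.e. as $K$ decreases the underestimation decays monotonically.
   Context: In the paper, $\hat\mu^A_i$ and $\hat\mu^B_i$ are sample-average estimators of $\mathbb{E}[X_i]$ for independent random variables $X_1,\dots,X_N$, computed from two disjoint random halves $S^A,S^B$ of a sample set $S=\bigcup_i S_i$, where $S_i$ consists of i.i.d. samples of $X_i$: $\hat\mu_i^A=\frac{1}{|S_i^A|}\sum_{s\in S_i^A}s$, $\hat\mu_i^B=\frac{1}{|S_i^B|}\sum_{s\in S_i^B}s$. *)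

theory Defs
  imports "HOL-Probability.Probability"
begin

text \<open>Indices are 0,...,N-1. Ranking of index i w.r.t. the vector b: number of indices
that come strictly before i in the descending order of b (ties in b broken by index).\<close>
definition rankB :: "nat \<Rightarrow> (nat \<Rightarrow> real) \<Rightarrow> nat \<Rightarrow> nat" where
  "rankB N b i = card {j. j < N \<and> (b j > b i \<or> (b j = b i \<and> j < i))}"

definition topK :: "nat \<Rightarrow> (nat \<Rightarrow> real) \<Rightarrow> nat \<Rightarrow> nat set" where
  "topK N b K = {i. i < N \<and> rankB N b i < K}"

definition argmax_set :: "nat \<Rightarrow> (nat \<Rightarrow> real) \<Rightarrow> (nat \<Rightarrow> real) \<Rightarrow> nat \<Rightarrow> nat set" where
  "argmax_set N a b K = {i \<in> topK N b K. \<forall>j \<in> topK N b K. a j \<le> a i}"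

text \<open>Value b_{a*_K} averaged over the uniform random tie-breaking among the maximisers
(i.e. the conditional expectation of b_{a*_K} given the vectors a, b).\<close>
definition sel_value :: "nat \<Rightarrow> (nat \<Rightarrow> real) \<Rightarrow> (nat \<Rightarrow> real) \<Rightarrow> nat \<Rightarrow> real" where
  "sel_value N a b K = (\<Sum>i \<in> argmax_set N a b K. b i) / real (card (argmax_set N a b K))"

end

theory Submission
  imports Defs
begin

text \<open>The inequality holds pointwise, before taking expectations. Let x be the index of
  b-rank K, so that M_{K+1} = M_K \<union> {x} and b x lies below every b-value on M_K, hence below
  their average over the maximisers of a on M_K. Adding x to the candidates either makes x the
  unique maximiser, leaves the maximisers unchanged, or adds x to the tie; in each case the
  average of b over the maximisers does not increase.\<close>

definition average :: "('i \<Rightarrow> real) \<Rightarrow> 'i set \<Rightarrow> real" where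
  "average f A = sum f A / card A"

lemma average_ge:
  assumes "finite A" "A \<noteq> {}" "\<And>i. i \<in> A \<Longrightarrow> c \<le> f i"
  shows "c \<le> average f A"
proof -
  have "card A * c \<le> sum f A"
    using sum_bounded_below[of A c f] assms(3) by simp
  moreover have "card A > 0"
    using assms(1,2) by (simp add: card_gt_0_iff)
  ultimately show ?thesis
    unfolding average_def by (simp add: field_simps)
qed

lemma average_insert_le:
  assumes "finite A" "x \<notin> A" "f x \<le> average f A"
  shows "average f (insert x A) \<le> average f A"
proof (cases "A = {}")
  case False
  then have "card A > 0"
    using assms(1) by (simp add: card_gt_0_iff)
  then have "card A * f x \<le> sum f A"
    using assms(3) unfolding average_def by (simp add: field_simps)
  then have "(sum f A + f x) * card A \<le> sum f A * (card A + 1)"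
    by (simp add: algebra_simps)
  then show ?thesis
    using assms(1,2) \<open>card A > 0\<close> unfolding average_def by (simp add: field_simps)
qed (use assms(3) in \<open>simp add: average_def\<close>)

lemma abs_average_le: "\<bar>average f A\<bar> \<le> (\<Sum>i\<in>A. \<bar>f i\<bar>)"
proof (cases "card A = 0")
  case False
  have "\<bar>average f A\<bar> \<le> \<bar>sum f A\<bar>"
    using False unfolding average_def by (simp add: divide_le_eq mult_le_cancel_left1 abs_divide)
  also have "\<dots> \<le> (\<Sum>i\<in>A. \<bar>f i\<bar>)"
    by (rule sum_abs)
  finally show ?thesis .
qed (simp add: average_def sum_nonneg)

definition maximisers :: "('i \<Rightarrow> 'a::linorder) \<Rightarrow> 'i set \<Rightarrow> 'i set" where
  "maximisers f S = {i \<in> S. \<forall>j \<in> S. f j \<le> f i}"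

lemma maximisers_subset: "maximisers f S \<subseteq> S"
  unfolding maximisers_def by blast

lemma maximisers_nonempty:
  assumes "finite S" "S \<noteq> {}"
  shows "maximisers f S \<noteq> {}"
proof -
  have "Max (f ` S) \<in> f ` S"
    using assms by simp
  then obtain i where "i \<in> S" "f i = Max (f ` S)"
    by auto
  then have "i \<in> maximisers f S"
    using assms(1) unfolding maximisers_def by simp
  then show ?thesis by blast
qed

lemma maximisers_insert_cases:
  assumes "finite S" "S \<noteq> {}"
  obtains "maximisers f (insert x S) = {x}"
  | "maximisers f (insert x S) = maximisers f S"
  | "maximisers f (insert x S) = insert x (maximisers f S)"
proof -
  obtain m where m: "m \<in> maximisers f S"
    using maximisers_nonempty[OF assms] by blast
  consider "f m < f x" | "f x < f m" | "f x = f m" by fastforce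
  then show ?thesis
  proof cases
    case 1
    then have "maximisers f (insert x S) = {x}"
      using m unfolding maximisers_def by (auto dest: order.strict_trans1)
    then show ?thesis using that by blast
  next
    case 2
    then have "maximisers f (insert x S) = maximisers f S"
      using m unfolding maximisers_def by (auto dest: order.trans)
    then show ?thesis using that by blast
  next
    case 3
    then have "maximisers f (insert x S) = insert x (maximisers f S)"
      using m unfolding maximisers_def by (auto dest: order.trans)
    then show ?thesis using that by blast
  qed
qed

lemma average_maximisers_insert_le:
  assumes "finite S" "S \<noteq> {}" "x \<notin> S" "\<And>i. i \<in> S \<Longrightarrow> b x \<le> b i"
  shows "average b (maximisers a (insert x S)) \<le> average b (maximisers a S)"
proof -
  have fin: "finite (maximisers a S)"
    using assms(1) maximisers_subset finite_subset by metis
  have below: "b x \<le> average b (maximisers a S)"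
    using maximisers_nonempty[OF assms(1,2)] maximisers_subset[of a S] assms(4) fin
    by (intro average_ge) auto
  from assms(1,2) show ?thesis
  proof (cases rule: maximisers_insert_cases[where f = a and x = x])
    case 3
    with fin below assms(3) maximisers_subset show ?thesis
      by (metis average_insert_le subsetD)
  qed (use below in \<open>simp_all add: average_def\<close>)
qed

lemma rankB_less_rankB:
  assumes "i < N" "j < N" "b i > b j \<or> (b i = b j \<and> i < j)"
  shows "rankB N b i < rankB N b j"
  unfolding rankB_def
proof (rule psubset_card_mono)
  show "{k. k < N \<and> (b k > b i \<or> (b k = b i \<and> k < i))}
      \<subset> {k. k < N \<and> (b k > b j \<or> (b k = b j \<and> k < j))}"
    using assms by auto
qed simp

lemma rankB_less_imp_le:
  assumes "i < N" "j < N" "rankB N b i < rankB N b j"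
  shows "b j \<le> b i"
proof (rule ccontr)
  assume "\<not> b j \<le> b i"
  then have "rankB N b j < rankB N b i"
    using rankB_less_rankB[of j N i b] assms(1,2) by simp
  with assms(3) show False by simp
qed

lemma rankB_less_N:
  assumes "i < N"
  shows "rankB N b i < N"
proof -
  have "{j. j < N \<and> (b j > b i \<or> (b j = b i \<and> j < i))} \<subset> {..<N}"
    using assms by auto
  then show ?thesis
    unfolding rankB_def by (metis card_lessThan finite_lessThan psubset_card_mono)
qed

lemma inj_on_rankB: "inj_on (rankB N b) {..<N}"
proof (rule inj_onI, rule ccontr)
  fix i j assume ij: "i \<in> {..<N}" "j \<in> {..<N}" "rankB N b i = rankB N b j" "i \<noteq> j"
  then have "(b i > b j \<or> (b i = b j \<and> i < j)) \<or> (b j > b i \<or> (b j = b i \<and> j < i))"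
    by auto
  then show False
    using rankB_less_rankB[of i N j b] rankB_less_rankB[of j N i b] ij by auto
qed

lemma rankB_image: "rankB N b ` {..<N} = {..<N}"
proof (rule endo_inj_surj)
  show "rankB N b ` {..<N} \<subseteq> {..<N}"
    using rankB_less_N by auto
qed (simp_all add: inj_on_rankB)

lemma topK_Suc:
  assumes "x < N" "rankB N b x = K"
  shows "topK N b (Suc K) = insert x (topK N b K)"
proof (rule set_eqI)
  fix i
  have "i < N \<and> rankB N b i = K \<longleftrightarrow> i = x"
    using inj_onD[OF inj_on_rankB[of N b], of i x] assms by auto
  then show "i \<in> topK N b (Suc K) \<longleftrightarrow> i \<in> insert x (topK N b K)"
    unfolding topK_def less_Suc_eq by blast
qed

lemma finite_topK: "finite (topK N b K)"
  unfolding topK_def by simp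

lemma topK_nonempty:
  assumes "0 < K" "K \<le> N"
  shows "topK N b K \<noteq> {}"
proof -
  have "0 \<in> rankB N b ` {..<N}"
    unfolding rankB_image using assms by simp
  then obtain i where "i < N" "rankB N b i = 0"
    by auto
  then have "i \<in> topK N b K"
    using assms(1) by (simp add: topK_def)
  then show ?thesis
    by auto
qed

lemma sel_value_eq_average: "sel_value N a b K = average b (maximisers a (topK N b K))"
  unfolding sel_value_def argmax_set_def average_def maximisers_def ..

lemma sel_value_Suc_le:
  assumes "1 \<le> K" "K < N"
  shows "sel_value N a b (Suc K) \<le> sel_value N a b K"
proof -
  have "K \<in> rankB N b ` {..<N}"
    unfolding rankB_image using assms(2) by simp
  then obtain x where x: "x < N" "rankB N b x = K"
    by auto
  have "x \<notin> topK N b K"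
    using x unfolding topK_def by simp
  moreover have "b x \<le> b i" if "i \<in> topK N b K" for i
    using that x rankB_less_imp_le[of i N x b] unfolding topK_def by simp
  ultimately show ?thesis
    unfolding sel_value_eq_average topK_Suc[OF x]
    using assms finite_topK topK_nonempty
    by (intro average_maximisers_insert_le) auto
qed

lemma sel_value_cong:
  assumes "\<And>i. i < N \<Longrightarrow> a i = a' i" "\<And>i. i < N \<Longrightarrow> b i = b' i"
  shows "sel_value N a b K = sel_value N a' b' K"
proof -
  have rankB: "rankB N b i = rankB N b' i" if "i < N" for i
    unfolding rankB_def using assms(2) that by (intro arg_cong[where f = card]) auto
  define S where "S = topK N b' K"
  have S: "topK N b K = S" "S \<subseteq> {..<N}"
    unfolding S_def topK_def by (auto simp: rankB)
  have "a i = a' i" if "i \<in> S" for i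
    using S(2) assms(1) that by auto
  then have "maximisers a S = maximisers a' S"
    unfolding maximisers_def by force
  moreover have "average b (maximisers a' S) = average b' (maximisers a' S)"
    using S(2) maximisers_subset[of a' S] assms(2) unfolding average_def
    by (intro arg_cong2[where f = "(/)"] sum.cong) auto
  ultimately show ?thesis
    unfolding sel_value_eq_average S S_def by simp
qed

lemma borel_measurable_sel_value:
  assumes "\<And>i. i < N \<Longrightarrow> (\<lambda>\<omega>. a \<omega> i) \<in> borel_measurable M"
    and "\<And>i. i < N \<Longrightarrow> (\<lambda>\<omega>. b \<omega> i) \<in> borel_measurable M"
  shows "(\<lambda>\<omega>. sel_value N (a \<omega>) (b \<omega>) K) \<in> borel_measurable M"
proof -
  \<comment> \<open>The measurability rules need every coordinate to be measurable, not only those below N.\<close>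
  define a' where "a' \<omega> i = (if i < N then a \<omega> i else 0)" for \<omega> i
  define b' where "b' \<omega> i = (if i < N then b \<omega> i else 0)" for \<omega> i
  have [measurable]: "(\<lambda>\<omega>. a' \<omega> i) \<in> borel_measurable M" for i
    using assms(1) unfolding a'_def by (cases "i < N") simp_all
  have [measurable]: "(\<lambda>\<omega>. b' \<omega> i) \<in> borel_measurable M" for i
    using assms(2) unfolding b'_def by (cases "i < N") simp_all
  have [measurable]: "(\<lambda>\<omega>. rankB N (b' \<omega>) i) \<in> M \<rightarrow>\<^sub>M count_space UNIV" for i
    unfolding rankB_def by (rule measurable_card) measurable
  have [measurable]: "Measurable.pred M (\<lambda>\<omega>. i \<in> argmax_set N (a' \<omega>) (b' \<omega>) K)" for i
    unfolding argmax_set_def topK_def mem_Collect_eq Ball_def by measurable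
  have [measurable]: "(\<lambda>\<omega>. card (argmax_set N (a' \<omega>) (b' \<omega>) K)) \<in> M \<rightarrow>\<^sub>M count_space UNIV"
    by (rule measurable_card) measurable
  have "argmax_set N a'' b'' K \<subseteq> {..<N}" for a'' b''
    by (auto simp: argmax_set_def topK_def)
  then have sel_value_eq: "sel_value N a'' b'' K =
      (\<Sum>i<N. if i \<in> argmax_set N a'' b'' K then b'' i else 0) / card (argmax_set N a'' b'' K)"
    for a'' b''
    unfolding sel_value_def by (simp add: sum.inter_restrict[symmetric] Int_absorb1)
  have "(\<lambda>\<omega>. sel_value N (a' \<omega>) (b' \<omega>) K) \<in> borel_measurable M"
    unfolding sel_value_eq by measurable
  moreover have "sel_value N (a' \<omega>) (b' \<omega>) K = sel_value N (a \<omega>) (b \<omega>) K" for \<omega>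
    by (rule sel_value_cong) (simp_all add: a'_def b'_def)
  ultimately show ?thesis by simp
qed

lemma integrable_sel_value:
  assumes "\<And>i. i < N \<Longrightarrow> integrable M (\<lambda>\<omega>. a \<omega> i)"
    and "\<And>i. i < N \<Longrightarrow> integrable M (\<lambda>\<omega>. b \<omega> i)"
  shows "integrable M (\<lambda>\<omega>. sel_value N (a \<omega>) (b \<omega>) K)"
proof (rule Bochner_Integration.integrable_bound)
  show "integrable M (\<lambda>\<omega>. \<Sum>i<N. \<bar>b \<omega> i\<bar>)"
    using assms(2) by (intro Bochner_Integration.integrable_sum integrable_abs) auto
  show "(\<lambda>\<omega>. sel_value N (a \<omega>) (b \<omega>) K) \<in> borel_measurable M"
    using assms by (intro borel_measurable_sel_value) auto
  have "\<bar>sel_value N a' b' K\<bar> \<le> (\<Sum>i<N. \<bar>b' i\<bar>)" for a' b'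
  proof -
    have "maximisers a' (topK N b' K) \<subseteq> {..<N}"
      using maximisers_subset by (fastforce simp: topK_def)
    then have "(\<Sum>i\<in>maximisers a' (topK N b' K). \<bar>b' i\<bar>) \<le> (\<Sum>i<N. \<bar>b' i\<bar>)"
      by (intro sum_mono2) auto
    then show ?thesis
      unfolding sel_value_eq_average using abs_average_le order.trans by blast
  qed
  then show "AE \<omega> in M. norm (sel_value N (a \<omega>) (b \<omega>) K) \<le> norm (\<Sum>i<N. \<bar>b \<omega> i\<bar>)"
    by (simp add: sum_nonneg)
qed

theorem mainTheorem1:
  fixes M :: "'s measure" and muA muB :: "'s \<Rightarrow> nat \<Rightarrow> real" and N K :: nat
  assumes "prob_space M"
    and "N \<ge> 2"
    and "\<forall>i<N. integrable M (\<lambda>\<omega>. muA \<omega> i)"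
    and "\<forall>i<N. integrable M (\<lambda>\<omega>. muB \<omega> i)"
    and "1 \<le> K" and "K < N"
  shows "(\<integral>\<omega>. sel_value N (muA \<omega>) (muB \<omega>) K \<partial>M)
           \<ge> (\<integral>\<omega>. sel_value N (muA \<omega>) (muB \<omega>) (Suc K) \<partial>M)"
proof -
  have "integrable M (\<lambda>\<omega>. sel_value N (muA \<omega>) (muB \<omega>) K')" for K'
    using assms(3,4) by (intro integrable_sel_value) auto
  then show ?thesis
    using sel_value_Suc_le[OF assms(5,6)] by (intro integral_mono)
qed

end
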